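(* Let $g$ be a probability density on $\mathbb{R}$ which is unimodal, symmetric about $0$, and logconcave, with survivor function $\bar G = 1-G$. Then for all $z\ge 0$: (a) $\displaystyle \frac{g(z)}{g(2z)} \ge \frac{1}{2\bar G(z)}-1$; (b) $\displaystyle \frac{\bar G(z)}{\bar G(2z)} \ge \frac{1}{2\bar G(z)}-1$.
   Context: A density $g$ on $\mathbb{R}$ is logconcave if $\log g$ is concave on the support of $g$. Unimodal and symmetric about $0$ means $g(z)=g(-z)$ and $g$ is nonincreasing on $[0,\infty)$. $G$ is the cdf of $g$. Ratios are considered where denominators are positive. *)

theory Defs
  imports "HOL-Analysis.Analysis"
begin

definition prob_density :: "(real \<Rightarrow> real) \<Rightarrow> bool" where
  "prob_density g \<longleftrightarrow> g \<in> borel_measurable lborel \<and> (\<forall>x. 0 \<le> g x) \<and>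
     integrable lborel g \<and> (\<integral>x. g x \<partial>lborel) = 1"

text \<open>Logconcave: log g is concave on the support of g (which in particular is convex).\<close>
definition logconcave :: "(real \<Rightarrow> real) \<Rightarrow> bool" where
  "logconcave g \<longleftrightarrow> concave_on {x. 0 < g x} (\<lambda>x. ln (g x))"

definition unimodal_symmetric :: "(real \<Rightarrow> real) \<Rightarrow> bool" where
  "unimodal_symmetric g \<longleftrightarrow> (\<forall>z. g (- z) = g z) \<and> (\<forall>x y. 0 \<le> x \<longrightarrow> x \<le> y \<longrightarrow> g y \<le> g x)"

definition cdf_of :: "(real \<Rightarrow> real) \<Rightarrow> real \<Rightarrow> real" where
  "cdf_of g z = (LINT x:{..z}|lborel. g x)"

definition survivor :: "(real \<Rightarrow> real) \<Rightarrow> real \<Rightarrow> real" where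
  "survivor g z = 1 - cdf_of g z"

end

theory Submission
  imports Defs
begin

(*
  Write I(z) for the mass of g on (0,z] and S for the survivor function.
  Symmetry gives S(0) = 1/2, hence 1 - 2 S(z) = 2 I(z) and the common right-hand
  side of (a) and (b) equals I(z) / S(z).  Both claims therefore reduce to
  bounds of the form  D * I(z) <= N * S(z), with D = g(2z), N = g(z) for (a)
  and D = S(2z), N = S(z) for (b).

  Such a bound follows by integrating a pointwise inequality D g(s) <= N g(z+s)
  over s in (0,z]: the right side integrates to N times the mass of (z,2z],
  which is at most N S(z).  The pointwise inequalities come from the exchange
  property of logconcave functions, g(a) g(d) <= g(b) g(c) whenever
  a <= b, c <= d and a + d = b + c, applied directly for (a) and after
  integrating over the tail for (b).
*)

lemma logconcave_exchange:
  fixes g :: "real \<Rightarrow> real"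
  assumes lc: "logconcave g" and nn: "\<And>x. 0 \<le> g x"
    and ab: "a \<le> b" and ac: "a \<le> c" and bd: "b \<le> d" and cd: "c \<le> d"
    and sum: "a + d = b + c"
  shows "g a * g d \<le> g b * g c"
proof (cases "g a > 0 \<and> g d > 0 \<and> a < d")
  case False
  then consider "g a = 0" | "g d = 0" | "a = d" using nn[of a] nn[of d] ab bd by force
  then show ?thesis
  proof cases
    case 3
    then have "b = a" "c = a" using ab bd ac cd by auto
    then show ?thesis using 3 by simp
  qed (use nn in \<open>auto intro: mult_nonneg_nonneg\<close>)
next
  case True
  define S where "S = {x. 0 < g x}"
  have conc: "concave_on S (\<lambda>x. ln (g x))" using lc by (simp add: logconcave_def S_def)
  have aS: "a \<in> S" and dS: "d \<in> S" using True by (auto simp: S_def)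
  define t where "t = (b - a) / (d - a)"
  have t0: "0 \<le> t" and t1: "t \<le> 1" using True ab bd by (auto simp: t_def field_simps)
  have "t * (d - a) = b - a" using True by (simp add: t_def)
  then have b_eq: "b = (1 - t) *\<^sub>R a + t *\<^sub>R d"
    and c_eq: "c = t *\<^sub>R a + (1 - t) *\<^sub>R d"
    using sum by (simp_all add: algebra_simps)
  have ln_b: "(1 - t) * ln (g a) + t * ln (g d) \<le> ln (g b)"
    using concave_onD[OF conc t0 t1 aS dS] b_eq by simp
  have ln_c: "t * ln (g a) + (1 - t) * ln (g d) \<le> ln (g c)"
    using concave_onD[OF conc _ _ aS dS, of "1 - t"] c_eq t0 t1 by simp
  have "convex S" using conc by (simp add: concave_on_iff)
  then have "b \<in> S" "c \<in> S"
    using convexD[OF _ aS dS, of "1 - t" t] convexD[OF _ aS dS, of t "1 - t"] b_eq c_eq t0 t1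
    by auto
  then have gb: "g b > 0" and gc: "g c > 0" by (auto simp: S_def)
  have "ln (g a * g d) \<le> ln (g b * g c)"
    using ln_b ln_c True gb gc by (simp add: ln_mult algebra_simps)
  then show ?thesis using True gb gc by simp
qed

definition mass :: "(real \<Rightarrow> real) \<Rightarrow> real set \<Rightarrow> real" where
  "mass g A = (\<integral>x. indicator A x * g x \<partial>lborel)"

lemma prob_density_nonneg: "prob_density g \<Longrightarrow> 0 \<le> g x"
  by (simp add: prob_density_def)

lemma integrable_restricted_density:
  assumes "prob_density g" and "A \<in> sets borel"
  shows "integrable lborel (\<lambda>x. indicator A x * g x)"
  using assms integrable_mult_indicator[of A lborel g] by (simp add: prob_density_def)

lemma mass_union:
  assumes pd: "prob_density g" and "A \<in> sets borel" "B \<in> sets borel" "A \<inter> B = {}"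
  shows "mass g (A \<union> B) = mass g A + mass g B"
proof -
  have "mass g (A \<union> B) = (\<integral>x. indicator A x * g x + indicator B x * g x \<partial>lborel)"
    unfolding mass_def using assms(4)
    by (intro Bochner_Integration.integral_cong) (auto split: split_indicator)
  then show ?thesis
    using integrable_restricted_density[OF pd] assms(2,3) by (simp add: mass_def)
qed

lemma mass_mono:
  assumes pd: "prob_density g" and "A \<subseteq> B" "A \<in> sets borel" "B \<in> sets borel"
  shows "mass g A \<le> mass g B"
  unfolding mass_def using assms prob_density_nonneg[OF pd]
  by (intro integral_mono integrable_restricted_density) (auto split: split_indicator)

lemma survivor_eq_mass:
  assumes pd: "prob_density g"
  shows "survivor g z = mass g {z<..}"
proof -
  have "{..z} \<union> {z<..} = UNIV" by auto
  then have "1 = mass g ({..z} \<union> {z<..})"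
    using pd by (simp add: mass_def prob_density_def)
  also have "\<dots> = mass g {..z} + mass g {z<..}"
    by (rule mass_union[OF pd]) auto
  finally show ?thesis
    by (simp add: survivor_def cdf_of_def set_lebesgue_integral_def mass_def)
qed

lemma mass_translate:
  assumes pd: "prob_density g" and A: "A \<in> sets borel"
  shows "has_bochner_integral lborel (\<lambda>t. indicator A (a + t) * g (a + t)) (mass g A)"
proof -
  have int: "integrable lborel (\<lambda>x. indicator A x * g x)"
    by (rule integrable_restricted_density[OF pd A])
  show ?thesis
    using lborel_integral_real_affine[of 1 "\<lambda>x. indicator A x * g x" a]
      lborel_integrable_real_affine[OF int, of 1 a]
    by (simp add: has_bochner_integral_iff mass_def)
qed

lemma survivor_translate:
  assumes pd: "prob_density g"
  shows "has_bochner_integral lborel (\<lambda>t. indicator {0<..} t * g (a + t)) (survivor g a)"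
proof -
  have "(\<lambda>t. indicator {a<..} (a + t) * g (a + t)) = (\<lambda>t. indicator {0<..} t * g (a + t))"
    by (auto simp: fun_eq_iff indicator_def)
  then show ?thesis
    using mass_translate[OF pd, of "{a<..}" a] by (simp add: survivor_eq_mass[OF pd])
qed

lemma interval_translate:
  assumes pd: "prob_density g"
  shows "has_bochner_integral lborel (\<lambda>t. indicator {0<..b} t * g (a + t)) (mass g {a<..a + b})"
proof -
  have "(\<lambda>t. indicator {a<..a + b} (a + t) * g (a + t)) = (\<lambda>t. indicator {0<..b} t * g (a + t))"
    by (auto simp: fun_eq_iff indicator_def)
  then show ?thesis using mass_translate[OF pd, of "{a<..a + b}" a] by simp
qed

lemma survivor_zero:
  assumes pd: "prob_density g" and sym: "\<And>x. g (- x) = g x"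
  shows "survivor g 0 = 1 / 2"
proof -
  have "cdf_of g 0 = mass g {..0}"
    by (simp add: cdf_of_def set_lebesgue_integral_def mass_def)
  also have "\<dots> = mass g {0..}"
    using lborel_integral_real_affine[of "-1" "\<lambda>x. indicator {..0} x * g x" 0]
    by (simp add: mass_def sym indicator_def)
  also have "\<dots> = mass g {0<..}"
    unfolding mass_def
    by (intro integral_cong_AE eventually_mono[OF AE_lborel_singleton[of 0]]
        borel_measurable_integrable integrable_restricted_density[OF pd])
       (auto split: split_indicator)
  also have "\<dots> = survivor g 0" by (simp add: survivor_eq_mass[OF pd])
  finally show ?thesis by (simp add: survivor_def)
qed

lemma central_mass:
  assumes pd: "prob_density g" and sym: "\<And>x. g (- x) = g x" and z: "0 \<le> z"
  shows "1 - 2 * survivor g z = 2 * mass g {0<..z}"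
proof -
  have "{0<..} = {0<..z} \<union> {z<..}" using z by auto
  then have "survivor g 0 = mass g ({0<..z} \<union> {z<..})"
    by (simp add: survivor_eq_mass[OF pd])
  also have "\<dots> = mass g {0<..z} + survivor g z"
    by (subst mass_union[OF pd]) (auto simp: survivor_eq_mass[OF pd])
  finally show ?thesis using survivor_zero[OF pd sym] by simp
qed

text \<open>If D g(s) <= N g(z+s) on (0,z], then integrating over (0,z] and bounding the
  mass of (z,2z] by the tail gives D I(z) <= N S(z).\<close>
lemma scaled_mass_bound:
  assumes pd: "prob_density g" and z: "0 \<le> z" and N: "0 \<le> N"
    and pointwise: "\<And>s. 0 < s \<Longrightarrow> s \<le> z \<Longrightarrow> D * g s \<le> N * g (z + s)"
  shows "D * mass g {0<..z} \<le> N * survivor g z"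
proof -
  have shift: "has_bochner_integral lborel (\<lambda>s. indicator {0<..z} s * g (z + s)) (mass g {z<..z + z})"
    by (rule interval_translate[OF pd])
  have "D * mass g {0<..z} = (\<integral>s. indicator {0<..z} s * (D * g s) \<partial>lborel)"
    by (simp add: mass_def ac_simps)
  also have "\<dots> \<le> (\<integral>s. indicator {0<..z} s * (N * g (z + s)) \<partial>lborel)"
  proof (rule integral_mono)
    have "integrable lborel (\<lambda>s. indicator {0<..z} s * g s)"
      by (rule integrable_restricted_density[OF pd]) simp
    from integrable_mult_right[OF this, of D]
    show "integrable lborel (\<lambda>s. indicator {0<..z} s * (D * g s))"
      by (simp add: ac_simps)
    show "integrable lborel (\<lambda>s. indicator {0<..z} s * (N * g (z + s)))"
      using integrable_mult_right[OF integrable.intros[OF shift], of N]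
      by (simp add: ac_simps)
  qed (auto simp: pointwise split: split_indicator)
  also have "\<dots> = N * mass g {z<..z + z}"
    using has_bochner_integral_integral_eq[OF shift] by (simp add: ac_simps)
  also have "\<dots> \<le> N * survivor g z"
    using N by (auto simp: survivor_eq_mass[OF pd] intro!: mult_left_mono mass_mono[OF pd])
  finally show ?thesis .
qed

text \<open>Integrated form of the exchange inequality: shifting mass from the point x
  to the later point u is compensated by moving the tail start from y back to
  x + y - u.\<close>
lemma survivor_exchange:
  assumes pd: "prob_density g" and lc: "logconcave g"
    and xu: "x \<le> u" and uy: "u \<le> y"
  shows "g x * survivor g y \<le> g u * survivor g (x + y - u)"
proof -
  note nn = prob_density_nonneg[OF pd]
  have tail_y: "has_bochner_integral lborel (\<lambda>t. indicator {0<..} t * g (y + t)) (survivor g y)"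
    and tail_v: "has_bochner_integral lborel (\<lambda>t. indicator {0<..} t * g (x + y - u + t))
      (survivor g (x + y - u))"
    by (rule survivor_translate[OF pd])+
  have "g x * survivor g y = (\<integral>t. indicator {0<..} t * (g x * g (y + t)) \<partial>lborel)"
    using has_bochner_integral_integral_eq[OF tail_y] by (simp add: ac_simps)
  also have "\<dots> \<le> (\<integral>t. indicator {0<..} t * (g u * g (x + y - u + t)) \<partial>lborel)"
  proof (rule integral_mono)
    show "integrable lborel (\<lambda>t. indicator {0<..} t * (g x * g (y + t)))"
      using integrable_mult_right[OF integrable.intros[OF tail_y], of "g x"]
      by (simp add: ac_simps)
    show "integrable lborel (\<lambda>t. indicator {0<..} t * (g u * g (x + y - u + t)))"
      using integrable_mult_right[OF integrable.intros[OF tail_v], of "g u"]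
      by (simp add: ac_simps)
    fix t :: real
    have "0 < t \<Longrightarrow> g x * g (y + t) \<le> g u * g (x + y - u + t)"
      by (rule logconcave_exchange[OF lc nn]) (use xu uy in auto)
    then show "indicator {0<..} t * (g x * g (y + t)) \<le> indicator {0<..} t * (g u * g (x + y - u + t))"
      by (auto split: split_indicator)
  qed
  also have "\<dots> = g u * survivor g (x + y - u)"
    using has_bochner_integral_integral_eq[OF tail_v] by (simp add: ac_simps)
  finally show ?thesis .
qed

lemma density_product_bound:
  assumes pd: "prob_density g" and lc: "logconcave g" and z: "0 \<le> z"
  shows "g (2 * z) * mass g {0<..z} \<le> g z * survivor g z"
proof (rule scaled_mass_bound[OF pd z prob_density_nonneg[OF pd]])
  fix s assume "0 < s" "s \<le> z"
  then show "g (2 * z) * g s \<le> g z * g (z + s)"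
    using logconcave_exchange[OF lc prob_density_nonneg[OF pd], of s z "z + s" "2 * z"]
    by (simp add: ac_simps)
qed

lemma survivor_product_bound:
  assumes pd: "prob_density g" and lc: "logconcave g" and z: "0 \<le> z"
    and S_nonneg: "0 \<le> survivor g z"
  shows "survivor g (2 * z) * mass g {0<..z} \<le> survivor g z * survivor g z"
proof (rule scaled_mass_bound[OF pd z S_nonneg])
  fix s assume "0 < s" "s \<le> z"
  then show "survivor g (2 * z) * g s \<le> survivor g z * g (z + s)"
    using survivor_exchange[OF pd lc, of s "z + s" "2 * z"] by (simp add: ac_simps)
qed

lemma ratio_from_product_bound:
  fixes S I D N :: real
  assumes "0 < S" "0 < D" "1 - 2 * S = 2 * I" "D * I \<le> N * S"
  shows "1 / (2 * S) - 1 \<le> N / D"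
proof -
  have "1 / (2 * S) - 1 = (1 - 2 * S) / (2 * S)" using assms(1) by (simp add: field_simps)
  also have "\<dots> = I / S" using assms(3) by simp
  also have "\<dots> \<le> N / D" using assms(1,2,4) by (simp add: divide_simps mult.commute)
  finally show ?thesis .
qed

theorem lemma2:
  fixes g :: "real \<Rightarrow> real"
  assumes "prob_density g"
    and "unimodal_symmetric g"
    and "logconcave g"
  shows "(\<forall>z\<ge>0. 0 < g (2 * z) \<and> 0 < survivor g z \<longrightarrow>
            g z / g (2 * z) \<ge> 1 / (2 * survivor g z) - 1) \<and>
         (\<forall>z\<ge>0. 0 < survivor g (2 * z) \<and> 0 < survivor g z \<longrightarrow>
            survivor g z / survivor g (2 * z) \<ge> 1 / (2 * survivor g z) - 1)"
proof (intro conjI allI impI; elim conjE)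
  note pd = assms(1) and lc = assms(3)
  have sym: "\<And>x. g (- x) = g x" using assms(2) by (simp add: unimodal_symmetric_def)
  fix z :: real
  assume z: "0 \<le> z" and S_pos: "0 < survivor g z"
  note central = central_mass[OF pd sym z]
  show "g z / g (2 * z) \<ge> 1 / (2 * survivor g z) - 1" if "0 < g (2 * z)"
    using ratio_from_product_bound[OF S_pos that central density_product_bound[OF pd lc z]] .
  show "survivor g z / survivor g (2 * z) \<ge> 1 / (2 * survivor g z) - 1"
    if "0 < survivor g (2 * z)"
    using ratio_from_product_bound[OF S_pos that central
        survivor_product_bound[OF pd lc z less_imp_le[OF S_pos]]] .
qed

end
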